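(* For every $n\geq0$, the dimension of the $n$th graded component of the quotient $\mathbf{ASM}/\mathcal{I}_{\operatorname{nw}}$ is $\binom{n}{2}+1$.
   Context: An ASM of size $n$ is an $n\times n$ matrix over $\{0,1,-1\}$ whose nonzero entries in every row and column alternate in sign, starting and ending with $+1$. For an ASM $\delta$, $\operatorname{nw}(\delta)$ is the number of positions $(i,j)$ with $\delta_{ij}=0$, $\sum_{i'<i}\delta_{i'j}=0$ and $\sum_{j'<j}\delta_{ij'}=1$ (the number of vertices of type nw in the associated six-vertex configuration with domain wall boundary conditions). $\mathbf{ASM}$ is the graded vector space (over $\mathbb{K}$ of characteristic zero) with basis $(\mathbf{F}_{M^\delta})$ indexed by ASMs, graded by size. $\mathcal{I}_{\operatorname{nw}}$ is the subspace spanned by all $\mathbf{F}_{M^{\delta_1}}-\mathbf{F}_{M^{\delta_2}}$ with $\delta_1,\delta_2$ ASMs of the same size satisfying $\operatorname{nw}(\delta_1)=\operatorname{nw}(\delta_2)$; the quotient is graded by size. *)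

theory Defs
  imports Complex_Main "HOL-Library.Function_Algebras"
begin

text \<open>A matrix of size n is represented as a function nat => nat => int, with the
  convention that entries outside the index range i, j < n are 0.\<close>
type_synonym mat = "nat \<Rightarrow> nat \<Rightarrow> int"

definition alternating :: "int list \<Rightarrow> bool" where
  "alternating xs \<longleftrightarrow> xs \<noteq> [] \<and> hd xs = 1 \<and> last xs = 1 \<and>
     (\<forall>k. Suc k < length xs \<longrightarrow> xs ! Suc k = - (xs ! k))"

definition is_ASM :: "nat \<Rightarrow> mat \<Rightarrow> bool" where
  "is_ASM n d \<longleftrightarrow>
     (\<forall>i j. d i j \<in> {0, 1, -1}) \<and>
     (\<forall>i j. (n \<le> i \<or> n \<le> j) \<longrightarrow> d i j = 0) \<and>
     (\<forall>i<n. alternating (filter (\<lambda>x. x \<noteq> 0) (map (\<lambda>j. d i j) [0..<n]))) \<and>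
     (\<forall>j<n. alternating (filter (\<lambda>x. x \<noteq> 0) (map (\<lambda>i. d i j) [0..<n])))"

definition ASMs :: "nat \<Rightarrow> mat set" where
  "ASMs n = {d. is_ASM n d}"

definition nw :: "nat \<Rightarrow> mat \<Rightarrow> nat" where
  "nw n d = card {(i, j). i < n \<and> j < n \<and> d i j = 0 \<and>
                   (\<Sum>i'<i. d i' j) = 0 \<and> (\<Sum>j'<j. d i j') = 1}"

text \<open>The space ASM: formal linear combinations of ASMs, i.e. finitely supported
  functions mat => 'k; the basis vector F_{M^d} is the indicator of d.\<close>
definition F :: "mat \<Rightarrow> mat \<Rightarrow> 'k::field" where
  "F d = (\<lambda>x. if x = d then 1 else 0)"

definition fscale :: "'k::field \<Rightarrow> (mat \<Rightarrow> 'k) \<Rightarrow> (mat \<Rightarrow> 'k)" where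
  "fscale c f = (\<lambda>x. c * f x)"

definition ASM_comp :: "nat \<Rightarrow> (mat \<Rightarrow> 'k::field) set" where
  "ASM_comp n = module.span fscale (F ` ASMs n)"

text \<open>n-th graded component of I_nw (differences of basis vectors of equal size, so
  the ideal is homogeneous and its degree-n part is spanned by size-n differences).\<close>
definition Inw_comp :: "nat \<Rightarrow> (mat \<Rightarrow> 'k::field) set" where
  "Inw_comp n = module.span fscale
     {F d1 - F d2 | d1 d2. d1 \<in> ASMs n \<and> d2 \<in> ASMs n \<and> nw n d1 = nw n d2}"

definition quot_dim :: "(mat \<Rightarrow> 'k::field) set \<Rightarrow> (mat \<Rightarrow> 'k) set \<Rightarrow> nat" where
  "quot_dim V W = vector_space.dim fscale V - vector_space.dim fscale W"

end

theory Submission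
  imports Defs "HOL-Library.FuncSet"
begin

text \<open>The quotient is spanned by the classes of the ASMs, and two of them are identified
  exactly when they share the same number of nw vertices; so its dimension is the number
  of values taken by nw on ASMs of size n. In row i, an nw vertex lies in a column whose
  partial sum above row i is 0; there are n - i such columns, one of them carrying the first
  1 of row i, hence nw is at most the sum of the n - 1 - i, that is n choose 2. Conversely, on
  a permutation matrix nw counts the non-inversions of the permutation, and prepending the
  value k to a permutation of n letters adds n - k non-inversions, so every value from 0
  to n choose 2 occurs.\<close>

lemma alternating_nth: "alternating ys \<Longrightarrow> k < length ys \<Longrightarrow> ys ! k = (-1) ^ k"
proof (induction k)
  case 0 then show ?case by (auto simp: alternating_def hd_conv_nth)
next
  case (Suc k) then show ?case by (auto simp: alternating_def)
qed

lemma sum_neg_one_power: "(\<Sum>k<m. (-1::int) ^ k) = (if even m then 0 else 1)"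
  by (induction m) auto

lemma alternating_sum_take:
  "alternating ys \<Longrightarrow> sum_list (take m ys) = (if even (min m (length ys)) then 0 else 1)"
proof -
  assume alt: "alternating ys"
  have "sum_list (take m ys) = (\<Sum>k<min m (length ys). ys ! k)"
    by (simp add: sum_list_sum_nth min_def atLeast0LessThan)
  also have "\<dots> = (\<Sum>k<min m (length ys). (-1) ^ k)"
    using alternating_nth[OF alt] by (intro sum.cong) auto
  finally show ?thesis by (simp add: sum_neg_one_power)
qed

lemma alternating_length_odd: "alternating ys \<Longrightarrow> odd (length ys)"
proof -
  assume alt: "alternating ys"
  then have ne: "ys \<noteq> []" and "last ys = 1" by (auto simp: alternating_def)
  then have "(-1::int) ^ (length ys - 1) = 1"
    using alternating_nth[OF alt, of "length ys - 1"] by (simp add: last_conv_nth)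
  then have "even (length ys - 1)" by (metis neg_one_odd_power one_neq_neg_one)
  with ne show ?thesis by (cases "length ys") auto
qed

lemma filter_take_eq_take_filter:
  "filter P (take k xs) = take (length (filter P (take k xs))) (filter P xs)"
proof -
  have "filter P xs = filter P (take k xs) @ filter P (drop k xs)"
    by (metis append_take_drop_id filter_append)
  then show ?thesis by (metis append_eq_conv_conj)
qed

lemma sum_list_filter_nonzero: "sum_list (filter (\<lambda>x. x \<noteq> 0) xs) = sum_list (xs :: int list)"
  using sum_list_map_filter[of xs "\<lambda>x. x \<noteq> 0" id] by simp

lemma alternating_nonzero_sum_take:
  fixes xs :: "int list"
  assumes "alternating (filter (\<lambda>x. x \<noteq> 0) xs)"
  shows "sum_list (take k xs) \<in> {0, 1}"
proof -
  let ?nz = "filter (\<lambda>x. x \<noteq> 0)"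
  have "sum_list (take k xs) = sum_list (take (length (?nz (take k xs))) (?nz xs))"
    by (metis filter_take_eq_take_filter sum_list_filter_nonzero)
  then show ?thesis using alternating_sum_take[OF assms] by simp
qed

lemma alternating_nonzero_sum_list:
  fixes xs :: "int list"
  assumes "alternating (filter (\<lambda>x. x \<noteq> 0) xs)"
  shows "sum_list xs = 1"
  using alternating_sum_take[OF assms, of "length xs"] alternating_length_odd[OF assms]
  by (simp add: sum_list_filter_nonzero)

lemma sum_lessThan_eq_sum_list_take:
  assumes "\<And>i. n \<le> i \<Longrightarrow> f i = 0"
  shows "(\<Sum>i<k. f i) = sum_list (take k (map f [0..<n]))"
proof (cases "k \<le> n")
  case True
  then show ?thesis by (simp add: take_map sum_list_sum_nth atLeast0LessThan[symmetric] min_def)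
next
  case False
  then have "(\<Sum>i<k. f i) = (\<Sum>i<n. f i)"
    using assms by (intro sum.mono_neutral_right) auto
  with False show ?thesis by (simp add: sum_list_sum_nth atLeast0LessThan)
qed

lemma ASM_column_prefix_sum:
  assumes "is_ASM n d" "j < n"
  shows "(\<Sum>i'<i. d i' j) \<in> {0, 1}"
proof -
  have "alternating (filter (\<lambda>x. x \<noteq> 0) (map (\<lambda>i. d i j) [0..<n]))"
    using assms by (auto simp: is_ASM_def)
  moreover have "(\<Sum>i'<i. d i' j) = sum_list (take i (map (\<lambda>i. d i j) [0..<n]))"
    using assms(1) by (intro sum_lessThan_eq_sum_list_take) (auto simp: is_ASM_def)
  ultimately show ?thesis using alternating_nonzero_sum_take by metis
qed

lemma ASM_row_sum:
  assumes "is_ASM n d" "i < n"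
  shows "(\<Sum>j<n. d i j) = 1"
proof -
  have "alternating (filter (\<lambda>x. x \<noteq> 0) (map (\<lambda>j. d i j) [0..<n]))"
    using assms by (auto simp: is_ASM_def)
  moreover have "(\<Sum>j<n. d i j) = sum_list (map (\<lambda>j. d i j) [0..<n])"
    by (simp add: sum_list_sum_nth atLeast0LessThan)
  ultimately show ?thesis using alternating_nonzero_sum_list by metis
qed

lemma ASM_row_has_one:
  assumes "is_ASM n d" "i < n"
  obtains j where "j < n" "d i j = 1"
proof -
  let ?ys = "filter (\<lambda>x. x \<noteq> 0) (map (\<lambda>j. d i j) [0..<n])"
  have "alternating ?ys" using assms by (auto simp: is_ASM_def)
  then have "1 \<in> set ?ys" by (metis alternating_def list.set_sel(1))
  then show ?thesis using that by auto
qed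

text \<open>Every row contributes 1 to the total of the partial column sums, which are 0 or 1.\<close>
lemma card_ASM_zero_column_prefix:
  assumes "is_ASM n d" "i \<le> n"
  shows "card {j. j < n \<and> (\<Sum>i'<i. d i' j) = 0} = n - i"
proof -
  let ?c = "\<lambda>j. \<Sum>i'<i. d i' j"
  let ?O = "{j \<in> {..<n}. ?c j = 1}"
  have "int i = (\<Sum>i'<i. \<Sum>j<n. d i' j)" using assms ASM_row_sum by simp
  also have "\<dots> = (\<Sum>j<n. ?c j)" by (rule sum.swap)
  also have "\<dots> = (\<Sum>j<n. if ?c j = 1 then 1 else 0)"
    using ASM_column_prefix_sum[OF assms(1)] by (intro sum.cong) auto
  also have "\<dots> = int (card ?O)" by (simp add: sum.If_cases Int_def)
  finally have "card ?O = i" by simp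
  then have "card ({..<n} - ?O) = n - i" by (subst card_Diff_subset) auto
  moreover have "{j. j < n \<and> ?c j = 0} = {..<n} - ?O"
    using ASM_column_prefix_sum[OF assms(1)] by auto
  ultimately show ?thesis by simp
qed

lemma Suc_choose_two: "Suc n choose 2 = (n choose 2) + n"
  by (simp add: numeral_2_eq_2)

lemma sum_lessThan_minus_eq_choose_two: "(\<Sum>i<n. n - 1 - i) = n choose 2"
proof (induction n)
  case 0 then show ?case by simp
next
  case (Suc n)
  have "(\<Sum>i<Suc n. Suc n - 1 - i) = (\<Sum>i<n. Suc n - 1 - i)" by simp
  also have "\<dots> = (\<Sum>i<n. (n - 1 - i) + 1)" by (intro sum.cong) auto
  also have "\<dots> = (n choose 2) + n" using Suc by (subst sum.distrib) simp
  finally show ?case by (simp add: Suc_choose_two)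
qed

lemma nw_le_choose_two:
  assumes "is_ASM n d"
  shows "nw n d \<le> n choose 2"
proof -
  let ?c = "\<lambda>i j. \<Sum>i'<i. d i' j"
  define T where "T i = {j. j < n \<and> d i j = 0 \<and> ?c i j = 0 \<and> (\<Sum>j'<j. d i j') = 1}" for i
  have card_T: "card (T i) \<le> n - 1 - i" if "i < n" for i
  proof -
    obtain p where p: "p < n" "d i p = 1" using ASM_row_has_one[OF assms \<open>i < n\<close>] by blast
    have "?c (Suc i) p \<in> {0, 1}" "?c i p \<in> {0, 1}"
      using ASM_column_prefix_sum[OF assms p(1)] by blast+
    then have "?c i p = 0" using p by auto
    have "T i \<subseteq> {j. j < n \<and> ?c i j = 0} - {p}" using p by (auto simp: T_def)
    then have "card (T i) \<le> card ({j. j < n \<and> ?c i j = 0} - {p})" by (intro card_mono) auto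
    also have "\<dots> = n - i - 1"
      using card_ASM_zero_column_prefix[OF assms, of i] that p \<open>?c i p = 0\<close> by simp
    finally show ?thesis by simp
  qed
  have "nw n d = card (Sigma {..<n} T)" unfolding nw_def T_def by (rule arg_cong[where f = card]) auto
  also have "\<dots> = (\<Sum>i<n. card (T i))" by (simp add: card_SigmaI T_def)
  also have "\<dots> \<le> (\<Sum>i<n. n - 1 - i)" using card_T by (intro sum_mono) auto
  also have "\<dots> = n choose 2" by (rule sum_lessThan_minus_eq_choose_two)
  finally show ?thesis .
qed

definition perm_matrix :: "nat \<Rightarrow> (nat \<Rightarrow> nat) \<Rightarrow> mat" where
  "perm_matrix n \<sigma> = (\<lambda>i j. if i < n \<and> j < n \<and> \<sigma> i = j then 1 else 0)"

definition noninversions :: "nat \<Rightarrow> (nat \<Rightarrow> nat) \<Rightarrow> nat" where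
  "noninversions n \<sigma> = card {(i, i'). i < i' \<and> i' < n \<and> \<sigma> i < \<sigma> i'}"

lemma filter_nonzero_indicator_list:
  "filter (\<lambda>x. x \<noteq> 0) (map (\<lambda>j. if j = a then (1::int) else 0) [0..<n]) = (if a < n then [1] else [])"
  by (induction n) auto

lemma is_ASM_perm_matrix:
  assumes \<sigma>: "bij_betw \<sigma> {..<n} {..<n}"
  shows "is_ASM n (perm_matrix n \<sigma>)"
  unfolding is_ASM_def
proof (intro conjI allI impI)
  fix i assume "i < n"
  then have "map (\<lambda>j. perm_matrix n \<sigma> i j) [0..<n] = map (\<lambda>j. if j = \<sigma> i then 1 else 0) [0..<n]"
    by (auto simp: perm_matrix_def)
  moreover have "\<sigma> i < n" using \<sigma> \<open>i < n\<close> by (auto simp: bij_betw_def)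
  ultimately show "alternating (filter (\<lambda>x. x \<noteq> 0) (map (\<lambda>j. perm_matrix n \<sigma> i j) [0..<n]))"
    by (simp only: filter_nonzero_indicator_list) (simp add: alternating_def)
next
  fix j assume "j < n"
  then obtain i' where i': "i' < n" "j = \<sigma> i'" using \<sigma> by (auto simp: bij_betw_def)
  have "map (\<lambda>i. perm_matrix n \<sigma> i j) [0..<n] = map (\<lambda>i. if i = i' then 1 else 0) [0..<n]"
    using \<sigma> i' \<open>j < n\<close> by (auto simp: perm_matrix_def bij_betw_def inj_on_def)
  with i' show "alternating (filter (\<lambda>x. x \<noteq> 0) (map (\<lambda>i. perm_matrix n \<sigma> i j) [0..<n]))"
    by (simp only: filter_nonzero_indicator_list) (simp add: alternating_def)
qed (auto simp: perm_matrix_def)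

lemma perm_matrix_row_prefix_sum:
  assumes "i < n" "\<sigma> i < n"
  shows "(\<Sum>j'<j. perm_matrix n \<sigma> i j') = (if \<sigma> i < j then 1 else 0)"
proof -
  have "(\<Sum>j'<j. perm_matrix n \<sigma> i j') = (\<Sum>j'<j. if \<sigma> i = j' then 1 else 0)"
    using assms by (intro sum.cong) (auto simp: perm_matrix_def)
  then show ?thesis by (simp add: sum.delta)
qed

lemma perm_matrix_column_prefix_sum:
  assumes "inj_on \<sigma> {..<n}" "i' < n" "\<sigma> i' < n"
  shows "(\<Sum>i<k. perm_matrix n \<sigma> i (\<sigma> i')) = (if i' < k then 1 else 0)"
proof -
  have "(\<Sum>i<k. perm_matrix n \<sigma> i (\<sigma> i')) = (\<Sum>i<k. if i' = i then 1 else 0)"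
    using assms by (intro sum.cong) (auto simp: perm_matrix_def inj_on_def)
  then show ?thesis by (simp add: sum.delta)
qed

text \<open>The nw vertex in row i and column \<sigma> i' corresponds to the non-inversion (i, i').\<close>
lemma nw_perm_matrix:
  assumes \<sigma>: "bij_betw \<sigma> {..<n} {..<n}"
  shows "nw n (perm_matrix n \<sigma>) = noninversions n \<sigma>"
proof -
  let ?P = "{(i, i'). i < i' \<and> i' < n \<and> \<sigma> i < \<sigma> i'}"
  let ?N = "{(i, j). i < n \<and> j < n \<and> perm_matrix n \<sigma> i j = 0 \<and>
              (\<Sum>i'<i. perm_matrix n \<sigma> i' j) = 0 \<and> (\<Sum>j'<j. perm_matrix n \<sigma> i j') = 1}"
  have inj: "inj_on \<sigma> {..<n}" and range: "\<And>i. i < n \<Longrightarrow> \<sigma> i < n" and onto: "\<sigma> ` {..<n} = {..<n}"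
    using \<sigma> by (auto simp: bij_betw_def)
  have N: "(i, \<sigma> i') \<in> ?N \<longleftrightarrow> (i, i') \<in> ?P" if "i' < n" for i i'
  proof (cases "i < n")
    case True
    have "perm_matrix n \<sigma> i (\<sigma> i') = 0 \<longleftrightarrow> i \<noteq> i'"
      using inj True that range by (auto simp: perm_matrix_def inj_on_def)
    moreover have "(\<Sum>i''<i. perm_matrix n \<sigma> i'' (\<sigma> i')) = 0 \<longleftrightarrow> i \<le> i'"
      using perm_matrix_column_prefix_sum[OF inj that range[OF that]] by simp
    moreover have "(\<Sum>j'<\<sigma> i'. perm_matrix n \<sigma> i j') = 1 \<longleftrightarrow> \<sigma> i < \<sigma> i'"
      using perm_matrix_row_prefix_sum[of i n \<sigma>, OF True range[OF True]] by simp
    ultimately show ?thesis using that True range[OF that] by auto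
  qed (use that in simp)
  have "?N = (\<lambda>(i, i'). (i, \<sigma> i')) ` ?P"
  proof (intro equalityI subsetI)
    fix x assume x: "x \<in> ?N"
    then obtain i j where ij: "x = (i, j)" "j < n" by blast
    then obtain i' where i': "i' < n" "j = \<sigma> i'" using onto by (metis imageE lessThan_iff)
    then have "(i, i') \<in> ?P" using N x ij by blast
    then show "x \<in> (\<lambda>(i, i'). (i, \<sigma> i')) ` ?P" using ij i' by (auto intro: image_eqI[of _ _ "(i, i')"])
  next
    fix x assume "x \<in> (\<lambda>(i, i'). (i, \<sigma> i')) ` ?P"
    then obtain i i' where "x = (i, \<sigma> i')" "(i, i') \<in> ?P" by auto
    then show "x \<in> ?N" using N by auto
  qed
  moreover have "inj_on (\<lambda>(i, i'). (i, \<sigma> i')) ?P" using inj by (auto simp: inj_on_def)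
  ultimately show ?thesis by (simp add: nw_def noninversions_def card_image)
qed

definition skip :: "nat \<Rightarrow> nat \<Rightarrow> nat" where
  "skip k x = (if x < k then x else Suc x)"

definition prepend_value :: "nat \<Rightarrow> (nat \<Rightarrow> nat) \<Rightarrow> nat \<Rightarrow> nat" where
  "prepend_value k \<sigma> i = (if i = 0 then k else skip k (\<sigma> (i - 1)))"

lemma skip_less_iff [simp]: "skip k x < skip k y \<longleftrightarrow> x < y"
  by (auto simp: skip_def)

lemma skip_neq [simp]: "skip k x \<noteq> k"
  by (auto simp: skip_def)

lemma bij_betw_prepend_value:
  assumes \<sigma>: "bij_betw \<sigma> {..<n} {..<n}" and "k \<le> n"
  shows "bij_betw (prepend_value k \<sigma>) {..<Suc n} {..<Suc n}"
proof -
  have inj: "inj_on (prepend_value k \<sigma>) {..<Suc n}"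
  proof (rule inj_onI)
    fix x y assume x: "x \<in> {..<Suc n}" and y: "y \<in> {..<Suc n}"
      and eq: "prepend_value k \<sigma> x = prepend_value k \<sigma> y"
    show "x = y"
    proof (cases "x = 0 \<or> y = 0")
      case False
      then have "skip k (\<sigma> (x - 1)) = skip k (\<sigma> (y - 1))" using eq by (simp add: prepend_value_def)
      then have "\<sigma> (x - 1) = \<sigma> (y - 1)" by (metis skip_less_iff nat_neq_iff)
      then have "x - 1 = y - 1" using \<sigma> x y False by (auto simp: bij_betw_def inj_on_def)
      then show ?thesis using False by arith
    qed (metis eq prepend_value_def skip_neq)
  qed
  have "prepend_value k \<sigma> ` {..<Suc n} \<subseteq> {..<Suc n}"
    using \<sigma> \<open>k \<le> n\<close> by (auto simp: prepend_value_def skip_def bij_betw_def)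
  moreover have "card (prepend_value k \<sigma> ` {..<Suc n}) = Suc n" using card_image[OF inj] by simp
  ultimately have "prepend_value k \<sigma> ` {..<Suc n} = {..<Suc n}" by (intro card_subset_eq) auto
  then show ?thesis using inj by (simp add: bij_betw_def)
qed

lemma card_perm_values_at_least:
  assumes \<sigma>: "bij_betw \<sigma> {..<n} {..<n}"
  shows "card {i. i < n \<and> k \<le> \<sigma> i} = n - k"
proof -
  have "inj_on \<sigma> {i. i < n \<and> k \<le> \<sigma> i}" using \<sigma> by (auto simp: bij_betw_def inj_on_def)
  moreover have "\<sigma> ` {i. i < n \<and> k \<le> \<sigma> i} = {k..<n}"
  proof (intro equalityI subsetI)
    fix y assume y: "y \<in> {k..<n}"
    then obtain i where "i < n" "y = \<sigma> i" using \<sigma> by (auto simp: bij_betw_def)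
    with y show "y \<in> \<sigma> ` {i. i < n \<and> k \<le> \<sigma> i}" by auto
  qed (use \<sigma> in \<open>auto simp: bij_betw_def\<close>)
  ultimately show ?thesis by (metis card_atLeastLessThan card_image)
qed

text \<open>The new first position forms a non-inversion with exactly the positions whose values are
  at least k.\<close>
lemma noninversions_prepend_value:
  assumes \<sigma>: "bij_betw \<sigma> {..<n} {..<n}" and "k \<le> n"
  shows "noninversions (Suc n) (prepend_value k \<sigma>) = noninversions n \<sigma> + (n - k)"
proof -
  let ?P = "{(i, i'). i < i' \<and> i' < n \<and> \<sigma> i < \<sigma> i'}"
  let ?A = "Pair 0 ` Suc ` {i. i < n \<and> k \<le> \<sigma> i}"
  let ?B = "map_prod Suc Suc ` ?P"
  have split: "{(i, i'). i < i' \<and> i' < Suc n \<and> prepend_value k \<sigma> i < prepend_value k \<sigma> i'} = ?A \<union> ?B"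
  proof (intro equalityI subsetI)
    fix x assume "x \<in> {(i, i'). i < i' \<and> i' < Suc n \<and> prepend_value k \<sigma> i < prepend_value k \<sigma> i'}"
    then obtain i i' where "x = (i, i')" "i < i'" "i' < Suc n"
        "prepend_value k \<sigma> i < prepend_value k \<sigma> i'"
      by auto
    moreover obtain j' where "i' = Suc j'" using \<open>i < i'\<close> by (cases i') auto
    ultimately have x: "x = (i, Suc j')" "i < Suc j'" "j' < n"
        "prepend_value k \<sigma> i < prepend_value k \<sigma> (Suc j')"
      by auto
    show "x \<in> ?A \<union> ?B"
    proof (cases i)
      case 0
      then have "k \<le> \<sigma> j'" using x by (auto simp: prepend_value_def skip_def split: if_splits)
      then show ?thesis using x 0 by auto
    next
      case (Suc j)
      then have "(j, j') \<in> ?P" using x by (auto simp: prepend_value_def)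
      then show ?thesis using x Suc by (auto intro: image_eqI[of _ _ "(j, j')"])
    qed
  qed (auto simp: prepend_value_def skip_def)
  have "finite ?P" by (rule finite_subset[of _ "{..<n} \<times> {..<n}"]) auto
  moreover have "?A \<inter> ?B = {}" by auto
  moreover have "card ?A = n - k"
    using card_perm_values_at_least[OF \<sigma>] by (simp add: card_image inj_on_def)
  moreover have "card ?B = card ?P" by (rule card_image) (auto simp: inj_on_def)
  ultimately show ?thesis unfolding noninversions_def split by (subst card_Un_disjoint) auto
qed

lemma noninversions_attained:
  assumes "v \<le> n choose 2"
  obtains \<sigma> where "bij_betw \<sigma> {..<n} {..<n}" "noninversions n \<sigma> = v"
  using assms
proof (induction n arbitrary: v thesis)
  case 0
  then show ?case by (auto simp: noninversions_def bij_betw_def binomial_eq_0)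
next
  case (Suc n)
  define v0 where "v0 = min v (n choose 2)"
  have "v - v0 \<le> n" using Suc.prems by (auto simp: v0_def Suc_choose_two)
  obtain \<sigma> where \<sigma>: "bij_betw \<sigma> {..<n} {..<n}" "noninversions n \<sigma> = v0"
    using Suc.IH[of v0] by (auto simp: v0_def)
  define k where "k = n - (v - v0)"
  have "k \<le> n" by (simp add: k_def)
  have "noninversions (Suc n) (prepend_value k \<sigma>) = v0 + (n - k)"
    using noninversions_prepend_value[OF \<sigma>(1) \<open>k \<le> n\<close>] \<sigma>(2) by simp
  also have "\<dots> = v" using \<open>v - v0 \<le> n\<close> by (simp add: k_def v0_def)
  finally show ?case using Suc.prems(1) bij_betw_prepend_value[OF \<sigma>(1) \<open>k \<le> n\<close>] by blast
qed

lemma nw_image_ASMs: "nw n ` ASMs n = {0..n choose 2}"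
proof (intro equalityI subsetI)
  fix v assume "v \<in> nw n ` ASMs n"
  then show "v \<in> {0..n choose 2}" using nw_le_choose_two by (auto simp: ASMs_def)
next
  fix v assume "v \<in> {0..n choose 2}"
  then obtain \<sigma> where "bij_betw \<sigma> {..<n} {..<n}" "noninversions n \<sigma> = v"
    using noninversions_attained by auto
  then have "perm_matrix n \<sigma> \<in> ASMs n" "nw n (perm_matrix n \<sigma>) = v"
    by (simp_all add: ASMs_def is_ASM_perm_matrix nw_perm_matrix)
  then show "v \<in> nw n ` ASMs n" by (metis image_eqI)
qed

interpretation fscale: vector_space "fscale :: 'k::field \<Rightarrow> (mat \<Rightarrow> 'k) \<Rightarrow> mat \<Rightarrow> 'k"
  by unfold_locales (auto simp: fscale_def fun_eq_iff algebra_simps)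

lemma sum_fun_apply: "(sum f S) x = (\<Sum>y\<in>S. f y x)"
  by (induction S rule: infinite_finite_induct) auto

lemma fscale_independent_if_dual_points:
  fixes B :: "(mat \<Rightarrow> 'k::field) set"
  assumes "\<And>v. v \<in> B \<Longrightarrow> \<exists>x. \<forall>w\<in>B. w x = (if w = v then 1 else 0)"
  shows "fscale.independent B"
  unfolding fscale.independent_explicit_module
proof clarify
  fix T u v assume T: "finite T" "T \<subseteq> B" and sum0: "(\<Sum>w\<in>T. fscale (u w) w) = 0" and "v \<in> T"
  then obtain x where x: "\<forall>w\<in>T. w x = (if w = v then 1 else 0)" using assms by blast
  have "0 = (\<Sum>w\<in>T. fscale (u w) w) x" using sum0 by simp
  also have "\<dots> = (\<Sum>w\<in>T. u w * w x)" by (simp add: sum_fun_apply fscale_def)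
  also have "\<dots> = (\<Sum>w\<in>T. if w = v then u w else 0)" using x by (intro sum.cong) auto
  also have "\<dots> = u v" using T(1) \<open>v \<in> T\<close> by simp
  finally show "u v = 0" by simp
qed

lemma F_apply: "F d x = (if x = d then 1 else 0)"
  by (simp add: F_def)

lemma F_eq_iff [simp]: "F a = F b \<longleftrightarrow> a = b"
  by (metis F_apply one_neq_zero)

lemma dim_span_F_image: "fscale.dim (fscale.span (F ` S :: (mat \<Rightarrow> 'k::field) set)) = card S"
proof -
  have "fscale.independent (F ` S :: (mat \<Rightarrow> 'k) set)"
    by (rule fscale_independent_if_dual_points) (auto simp: F_apply)
  moreover have "inj_on (F :: mat \<Rightarrow> mat \<Rightarrow> 'k) S" by (simp add: inj_on_def)
  ultimately show ?thesis by (simp add: fscale.dim_eq_card_independent card_image)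
qed

definition fibre_rep :: "'a set \<Rightarrow> ('a \<Rightarrow> 'b) \<Rightarrow> 'a \<Rightarrow> 'a" where
  "fibre_rep A g d = inv_into A g (g d)"

lemma fibre_rep_in: "d \<in> A \<Longrightarrow> fibre_rep A g d \<in> A"
  by (simp add: fibre_rep_def inv_into_into)

lemma fibre_rep_same_fibre: "d \<in> A \<Longrightarrow> g (fibre_rep A g d) = g d"
  by (simp add: fibre_rep_def f_inv_into_f)

lemma fibre_rep_idem: "d \<in> fibre_rep A g ` A \<Longrightarrow> fibre_rep A g d = d"
  by (auto simp: fibre_rep_def f_inv_into_f)

lemma card_fibre_reps: "card (fibre_rep A g ` A) = card (g ` A)"
proof -
  have "fibre_rep A g ` A = inv_into A g ` g ` A" by (auto simp: fibre_rep_def)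
  then show ?thesis by (simp add: card_image inj_on_inv_into)
qed

text \<open>Within each fibre of g, the differences with a fixed representative span all differences,
  and they are independent because the non-representative d only occurs in F d - F (rep d).\<close>
lemma dim_span_fibre_differences:
  fixes A :: "mat set" and g :: "mat \<Rightarrow> 'b"
  assumes "finite A"
  shows "fscale.dim (fscale.span {F d1 - F d2 | d1 d2. d1 \<in> A \<and> d2 \<in> A \<and> g d1 = g d2}
           :: (mat \<Rightarrow> 'k::field) set) = card A - card (g ` A)"
proof -
  let ?D = "{F d1 - F d2 | d1 d2. d1 \<in> A \<and> d2 \<in> A \<and> g d1 = g d2} :: (mat \<Rightarrow> 'k) set"
  let ?R = "fibre_rep A g ` A"
  define h :: "mat \<Rightarrow> mat \<Rightarrow> 'k" where "h d = F d - F (fibre_rep A g d)" for d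
  have h_apply: "h e d = (if e = d then 1 else 0)" if "d \<in> A - ?R" "e \<in> A" for d e
  proof -
    have "fibre_rep A g e \<noteq> d" using that by blast
    then show ?thesis by (simp add: h_def F_apply)
  qed
  have h_span: "h d \<in> fscale.span (h ` (A - ?R))" if "d \<in> A" for d
  proof (cases "d \<in> ?R")
    case True
    then have "fibre_rep A g d = d" by (rule fibre_rep_idem)
    then show ?thesis unfolding h_def by (simp add: fscale.span_zero)
  next
    case False
    then have "d \<in> A - ?R" using that by blast
    then show ?thesis by (intro fscale.span_base imageI)
  qed
  have "fscale.span ?D = fscale.span (h ` (A - ?R))"
  proof (subst fscale.span_eq, intro conjI)
    show "?D \<subseteq> fscale.span (h ` (A - ?R))"
    proof
      fix x assume "x \<in> ?D"
      then obtain d1 d2 where "x = F d1 - F d2" "d1 \<in> A" "d2 \<in> A" "g d1 = g d2" by blast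
      then have "x = h d1 - h d2" by (simp add: h_def fibre_rep_def)
      then show "x \<in> fscale.span (h ` (A - ?R))"
        using h_span \<open>d1 \<in> A\<close> \<open>d2 \<in> A\<close> by (simp add: fscale.span_diff)
    qed
    show "h ` (A - ?R) \<subseteq> fscale.span ?D"
    proof (rule image_subsetI, rule fscale.span_base)
      fix d assume "d \<in> A - ?R"
      then show "h d \<in> ?D" unfolding h_def
        by (intro CollectI exI[of _ d] exI[of _ "fibre_rep A g d"])
          (simp add: fibre_rep_in fibre_rep_same_fibre)
    qed
  qed
  moreover have inj: "inj_on h (A - ?R)"
    by (rule inj_onI) (metis DiffD1 h_apply one_neq_zero)
  moreover have "fscale.independent (h ` (A - ?R))"
  proof (rule fscale_independent_if_dual_points)
    fix v assume "v \<in> h ` (A - ?R)"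
    then obtain d where d: "d \<in> A - ?R" "v = h d" by blast
    have "w d = (if w = v then 1 else 0)" if "w \<in> h ` (A - ?R)" for w
    proof -
      obtain e where e: "e \<in> A - ?R" "w = h e" using \<open>w \<in> h ` (A - ?R)\<close> by blast
      then have "w = v \<longleftrightarrow> e = d" using d inj by (auto simp: inj_on_eq_iff)
      then show ?thesis using h_apply[of d e] d e by simp
    qed
    then show "\<exists>x. \<forall>w \<in> h ` (A - ?R). w x = (if w = v then 1 else 0)" by blast
  qed
  moreover have "card (A - ?R) = card A - card (g ` A)"
    using assms fibre_rep_in by (subst card_Diff_subset) (auto simp: card_fibre_reps)
  ultimately show ?thesis by (simp add: fscale.dim_span fscale.dim_eq_card_independent card_image)
qed

lemma finite_ASMs: "finite (ASMs n)"
proof -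
  let ?extend = "\<lambda>f :: nat \<times> nat \<Rightarrow> int. \<lambda>i j. if i < n \<and> j < n then f (i, j) else 0"
  have "ASMs n \<subseteq> ?extend ` (({..<n} \<times> {..<n}) \<rightarrow>\<^sub>E {0, 1, -1})"
  proof
    fix d assume "d \<in> ASMs n"
    then have entries: "\<forall>i j. d i j \<in> {0, 1, -1}" and outside: "\<forall>i j. n \<le> i \<or> n \<le> j \<longrightarrow> d i j = 0"
      unfolding ASMs_def is_ASM_def by blast+
    have "d = ?extend (restrict (\<lambda>(i, j). d i j) ({..<n} \<times> {..<n}))"
      using outside by (auto simp: fun_eq_iff)
    moreover have "restrict (\<lambda>(i, j). d i j) ({..<n} \<times> {..<n}) \<in> ({..<n} \<times> {..<n}) \<rightarrow>\<^sub>E {0, 1, -1}"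
      using entries by auto
    ultimately show "d \<in> ?extend ` (({..<n} \<times> {..<n}) \<rightarrow>\<^sub>E {0, 1, -1})" by blast
  qed
  moreover have "finite (({..<n} \<times> {..<n}) \<rightarrow>\<^sub>E ({0, 1, -1} :: int set))"
    by (intro finite_PiE) auto
  ultimately show ?thesis by (meson finite_imageI finite_subset)
qed

theorem proposition4p7:
  fixes n :: nat
  shows "quot_dim (ASM_comp n :: (mat \<Rightarrow> 'k::field_char_0) set) (Inw_comp n) = (n choose 2) + 1"
proof -
  have "quot_dim (ASM_comp n :: (mat \<Rightarrow> 'k) set) (Inw_comp n)
      = card (ASMs n) - (card (ASMs n) - card (nw n ` ASMs n))"
    unfolding quot_dim_def ASM_comp_def Inw_comp_def dim_span_F_image
      dim_span_fibre_differences[OF finite_ASMs] ..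
  also have "\<dots> = card (nw n ` ASMs n)" using card_image_le[OF finite_ASMs, of "nw n"] by simp
  also have "\<dots> = (n choose 2) + 1" by (simp add: nw_image_ASMs)
  finally show ?thesis .
qed

end
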